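(* Let $(R,+,\cdot)$ be a finite simple additively idempotent semiring with $|R|>2$ such that $(R,+)$ has a neutral element $0_R$, and let $(M,+)$ be a finite idempotent sub-irreducible $R$-semimodule. Then $(M,+)$ has a neutral element.
   Context: A semiring is a nonempty set with a commutative semigroup operation $+$ and a semigroup operation $\cdot$ satisfying both distributive laws; simple if its only congruences are the identity and the full relation; additively idempotent if $r+r=r$. An $R$-semimodule is a commutative semigroup $(M,+)$ with an action $R\times M\to M$ satisfying $r(sx)=(rs)x$, $(r+s)x=rx+sx$, $r(x+y)=rx+ry$; idempotent if $x+x=x$. A subsemimodule is a subsemigroup closed under the action. $M$ is quasitrivial if $rx=sx$ for all $r,s,x$; id-quasitrivial if $rx=x$ for all $r,x$; sub-irreducible if not quasitrivial and all proper subsemimodules are id-quasitrivial. *)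

theory Defs
  imports Main
begin

definition semiring :: "('r \<Rightarrow> 'r \<Rightarrow> 'r) \<Rightarrow> ('r \<Rightarrow> 'r \<Rightarrow> 'r) \<Rightarrow> bool" where
  "semiring add mul \<longleftrightarrow>
     (\<forall>a b c. add (add a b) c = add a (add b c)) \<and>
     (\<forall>a b. add a b = add b a) \<and>
     (\<forall>a b c. mul (mul a b) c = mul a (mul b c)) \<and>
     (\<forall>a b c. mul a (add b c) = add (mul a b) (mul a c)) \<and>
     (\<forall>a b c. mul (add a b) c = add (mul a c) (mul b c))"

definition semiring_congruence ::
  "('r \<Rightarrow> 'r \<Rightarrow> 'r) \<Rightarrow> ('r \<Rightarrow> 'r \<Rightarrow> 'r) \<Rightarrow> ('r \<times> 'r) set \<Rightarrow> bool" where
  "semiring_congruence add mul \<rho> \<longleftrightarrow>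
     equiv UNIV \<rho> \<and>
     (\<forall>a b c d. (a, b) \<in> \<rho> \<and> (c, d) \<in> \<rho> \<longrightarrow>
        (add a c, add b d) \<in> \<rho> \<and> (mul a c, mul b d) \<in> \<rho>)"

definition simple_semiring :: "('r \<Rightarrow> 'r \<Rightarrow> 'r) \<Rightarrow> ('r \<Rightarrow> 'r \<Rightarrow> 'r) \<Rightarrow> bool" where
  "simple_semiring add mul \<longleftrightarrow> semiring add mul \<and>
     (\<forall>\<rho>. semiring_congruence add mul \<rho> \<longrightarrow> \<rho> = Id \<or> \<rho> = UNIV)"

definition add_idempotent :: "('a \<Rightarrow> 'a \<Rightarrow> 'a) \<Rightarrow> bool" where
  "add_idempotent add \<longleftrightarrow> (\<forall>x. add x x = x)"

definition semimodule ::
  "('r \<Rightarrow> 'r \<Rightarrow> 'r) \<Rightarrow> ('r \<Rightarrow> 'r \<Rightarrow> 'r) \<Rightarrow> ('m \<Rightarrow> 'm \<Rightarrow> 'm) \<Rightarrow> ('r \<Rightarrow> 'm \<Rightarrow> 'm) \<Rightarrow> bool" where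
  "semimodule add mul madd act \<longleftrightarrow>
     (\<forall>x y z. madd (madd x y) z = madd x (madd y z)) \<and>
     (\<forall>x y. madd x y = madd y x) \<and>
     (\<forall>r s x. act r (act s x) = act (mul r s) x) \<and>
     (\<forall>r s x. act (add r s) x = madd (act r x) (act s x)) \<and>
     (\<forall>r x y. act r (madd x y) = madd (act r x) (act r y))"

definition subsemimodule :: "('m \<Rightarrow> 'm \<Rightarrow> 'm) \<Rightarrow> ('r \<Rightarrow> 'm \<Rightarrow> 'm) \<Rightarrow> 'm set \<Rightarrow> bool" where
  "subsemimodule madd act N \<longleftrightarrow> N \<noteq> {} \<and>
     (\<forall>x\<in>N. \<forall>y\<in>N. madd x y \<in> N) \<and> (\<forall>r. \<forall>x\<in>N. act r x \<in> N)"

definition quasitrivial :: "('r \<Rightarrow> 'm \<Rightarrow> 'm) \<Rightarrow> bool" where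
  "quasitrivial act \<longleftrightarrow> (\<forall>r s x. act r x = act s x)"

definition id_quasitrivial_on :: "('r \<Rightarrow> 'm \<Rightarrow> 'm) \<Rightarrow> 'm set \<Rightarrow> bool" where
  "id_quasitrivial_on act N \<longleftrightarrow> (\<forall>r. \<forall>x\<in>N. act r x = x)"

definition sub_irreducible :: "('m \<Rightarrow> 'm \<Rightarrow> 'm) \<Rightarrow> ('r \<Rightarrow> 'm \<Rightarrow> 'm) \<Rightarrow> bool" where
  "sub_irreducible madd act \<longleftrightarrow> \<not> quasitrivial act \<and>
     (\<forall>N. subsemimodule madd act N \<and> N \<noteq> UNIV \<longrightarrow> id_quasitrivial_on act N)"

definition has_neutral :: "('a \<Rightarrow> 'a \<Rightarrow> 'a) \<Rightarrow> bool" where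
  "has_neutral add \<longleftrightarrow> (\<exists>z. \<forall>x. add z x = x)"

end

theory Submission
  imports Defs
begin

text \<open>
  An idempotent semimodule is a join-semilattice under \<open>x \<preceq> y \<longleftrightarrow> x + y = y\<close>, the action is
  monotone, and \<open>0\<^sub>R x\<close> is the least element of the orbit of \<open>x\<close>. Suppose \<open>M\<close> has no least
  element. An up-set \<open>\<up>m\<close> with \<open>m \<preceq> r m\<close> for all \<open>r\<close> is a proper subsemimodule, hence fixed
  pointwise; so by sub-irreducibility some minimal \<open>m\<close> is moved by some \<open>r\<close>, and the subsemimodule
  \<open>\<up>m \<union> \<up>(0\<^sub>R m)\<close> containing it must be all of \<open>M\<close>. Then \<open>m' = 0\<^sub>R m\<close> is not below \<open>m\<close> and is
  fixed by every \<open>r\<close>, so \<open>\<up>m'\<close> is fixed pointwise; as the action maps \<open>\<up>m\<close> into \<open>\<up>m'\<close>, this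
  gives \<open>(r s) x = s x\<close> on \<open>M\<close>. Simplicity makes the action faithful, so \<open>r s = s\<close> in \<open>R\<close>; but a
  left-trivial multiplication turns the partition \<open>{0\<^sub>R}, R - {0\<^sub>R}\<close> into a congruence, which is
  impossible when \<open>|R| > 2\<close>.
\<close>

lemma simple_semiring_action_faithful:
  assumes "simple_semiring add mul" "semimodule add mul madd act" "\<not> quasitrivial act"
    and "\<And>x. act r x = act s x"
  shows "r = s"
proof -
  let ?\<rho> = "{(r, s). \<forall>x. act r x = act s x}"
  have "act (add r s) x = madd (act r x) (act s x)" "act (mul r s) x = act r (act s x)" for r s x
    using assms(2) unfolding semimodule_def by simp_all
  then have "semiring_congruence add mul ?\<rho>"
    unfolding semiring_congruence_def equiv_def refl_on_def sym_def trans_def by simp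
  moreover have "?\<rho> \<noteq> UNIV"
    using assms(3) unfolding quasitrivial_def by auto
  ultimately have "?\<rho> = Id"
    using assms(1) unfolding simple_semiring_def by blast
  with assms(4) show ?thesis by auto
qed

lemma simple_semiring_mul_not_left_trivial:
  fixes add mul :: "'r \<Rightarrow> 'r \<Rightarrow> 'r"
  assumes "simple_semiring add mul" "add_idempotent add"
    and zero: "\<And>r. add z r = r" and "card (UNIV :: 'r set) > 2"
  shows "\<not> (\<forall>r s. mul r s = s)"
proof
  assume left_trivial: "\<forall>r s. mul r s = s"
  have not_pair: "\<not> UNIV \<subseteq> {z, a}" for a
  proof
    assume "UNIV \<subseteq> {z, a}"
    then have "card (UNIV :: 'r set) \<le> card {z, a}" by (simp add: card_mono)
    also have "\<dots> \<le> 2" by (simp add: card_insert_if)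
    finally show False using assms(4) by simp
  qed
  obtain a where "a \<noteq> z" using not_pair[of z] by blast
  obtain b where "b \<noteq> z" "b \<noteq> a" using not_pair[of a] by blast
  have assoc: "add (add a b) c = add a (add b c)" and comm: "add a b = add b a" for a b c
    using assms(1) unfolding simple_semiring_def semiring_def by blast+
  have add_eq_zero: "add a c = z \<longleftrightarrow> a = z \<and> c = z" for a c
  proof
    assume sum: "add a c = z"
    have "add a z = add (add a a) c" by (simp add: sum[symmetric] assoc)
    also have "\<dots> = z" using assms(2) sum unfolding add_idempotent_def by simp
    finally have "a = z" using comm zero by metis
    with sum zero show "a = z \<and> c = z" by simp
  qed (simp add: zero)
  let ?\<rho> = "{(a, b). a = z \<longleftrightarrow> b = z}"
  have "semiring_congruence add mul ?\<rho>"
    unfolding semiring_congruence_def equiv_def refl_on_def sym_def trans_def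
    using add_eq_zero left_trivial by auto
  then have "?\<rho> = Id \<or> ?\<rho> = UNIV"
    using assms(1) unfolding simple_semiring_def by blast
  moreover have "(a, b) \<in> ?\<rho>" "(a, z) \<notin> ?\<rho>"
    using \<open>a \<noteq> z\<close> \<open>b \<noteq> z\<close> by auto
  ultimately show False using \<open>b \<noteq> a\<close> by auto
qed

locale idempotent_semimodule =
  fixes add mul :: "'r \<Rightarrow> 'r \<Rightarrow> 'r" and madd :: "'m \<Rightarrow> 'm \<Rightarrow> 'm" and act :: "'r \<Rightarrow> 'm \<Rightarrow> 'm"
  assumes semimodule: "semimodule add mul madd act"
    and madd_idempotent: "add_idempotent madd"
begin

lemma madd_assoc: "madd (madd x y) w = madd x (madd y w)"
  and madd_commute: "madd x y = madd y x"
  and act_act: "act r (act s x) = act (mul r s) x"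
  and act_add: "act (add r s) x = madd (act r x) (act s x)"
  and act_madd: "act r (madd x y) = madd (act r x) (act r y)"
  using semimodule unfolding semimodule_def by blast+

lemma madd_idem: "madd x x = x"
  using madd_idempotent unfolding add_idempotent_def by blast

definition below :: "'m \<Rightarrow> 'm \<Rightarrow> bool" (infix "\<preceq>" 50)
  where "x \<preceq> y \<longleftrightarrow> madd x y = y"

definition minimal :: "'m \<Rightarrow> bool"
  where "minimal m \<longleftrightarrow> (\<forall>y. y \<preceq> m \<longrightarrow> y = m)"

lemma below_refl [simp]: "x \<preceq> x"
  by (simp add: below_def madd_idem)

lemma below_trans: "x \<preceq> y \<Longrightarrow> y \<preceq> w \<Longrightarrow> x \<preceq> w"
  unfolding below_def by (metis madd_assoc)

lemma below_antisym: "x \<preceq> y \<Longrightarrow> y \<preceq> x \<Longrightarrow> x = y"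
  unfolding below_def by (metis madd_commute)

lemma below_madd: "x \<preceq> y \<Longrightarrow> x \<preceq> madd y w"
  unfolding below_def by (metis madd_assoc)

lemma act_mono: "x \<preceq> y \<Longrightarrow> act r x \<preceq> act r y"
  unfolding below_def by (metis act_madd)

lemma act_below_act_add: "act r x \<preceq> act (add r s) x"
  unfolding below_def act_add by (metis madd_assoc madd_idem)

lemma exists_minimal_below:
  assumes "finite (UNIV :: 'm set)"
  shows "\<exists>m. m \<preceq> x \<and> minimal m"
proof (induction x rule: measure_induct_rule[where f = "\<lambda>x. card {y. y \<preceq> x}"])
  case (less x)
  show ?case
  proof (cases "minimal x")
    case False
    then obtain y where "y \<preceq> x" "y \<noteq> x" unfolding minimal_def by blast
    then have "\<not> x \<preceq> y" using below_antisym by blast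
    with \<open>y \<preceq> x\<close> have "{w. w \<preceq> y} \<subset> {w. w \<preceq> x}"
      using below_trans below_refl by blast
    then have "card {w. w \<preceq> y} < card {w. w \<preceq> x}"
      using assms by (metis finite_subset psubset_card_mono subset_UNIV)
    with less obtain m where "m \<preceq> y" "minimal m" by blast
    with \<open>y \<preceq> x\<close> show ?thesis using below_trans by blast
  qed (use below_refl in blast)
qed

lemma subsemimodule_up_set:
  assumes "\<And>r. m \<preceq> act r m"
  shows "subsemimodule madd act {x. m \<preceq> x}"
  unfolding subsemimodule_def
  using assms below_refl below_madd act_mono below_trans by blast

text \<open>Both up-sets are mapped into \<open>\<up>(z m)\<close>: \<open>z m \<preceq> r m \<preceq> r x\<close>, resp.
  \<open>z m \<preceq> (r z) m = r (z m) \<preceq> r x\<close>.\<close>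

lemma subsemimodule_up_set_union:
  assumes "\<And>r y. act z y \<preceq> act r y"
  shows "subsemimodule madd act ({x. m \<preceq> x} \<union> {x. act z m \<preceq> x})"
proof -
  have "act z m \<preceq> act r x" if "m \<preceq> x \<or> act z m \<preceq> x" for r x
    using that
  proof
    assume "m \<preceq> x"
    then show ?thesis using act_mono assms below_trans by blast
  next
    assume "act z m \<preceq> x"
    then have "act (mul r z) m \<preceq> act r x" using act_mono act_act by metis
    then show ?thesis using assms below_trans by blast
  qed
  then show ?thesis
    unfolding subsemimodule_def using below_refl below_madd by blast
qed

end

locale finite_sub_irreducible_semimodule =
  idempotent_semimodule add mul madd act
    for add mul :: "'r \<Rightarrow> 'r \<Rightarrow> 'r" and madd :: "'m \<Rightarrow> 'm \<Rightarrow> 'm" and act :: "'r \<Rightarrow> 'm \<Rightarrow> 'm" +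
  fixes z :: 'r
  assumes add_zero: "\<And>r. add z r = r"
    and finite_carrier: "finite (UNIV :: 'm set)"
    and sub_irreducible: "sub_irreducible madd act"
begin

lemma act_zero_below: "act z x \<preceq> act r x"
  using act_below_act_add[of z x r] by (simp add: add_zero)

lemma subsemimodule_eq_UNIV_if_not_fixed:
  assumes "subsemimodule madd act N" "x \<in> N" "act r x \<noteq> x"
  shows "N = UNIV"
  using assms sub_irreducible unfolding sub_irreducible_def id_quasitrivial_on_def by blast

lemma up_set_union_eq_UNIV:
  assumes "act r m \<noteq> m"
  shows "{x. m \<preceq> x} \<union> {x. act z m \<preceq> x} = UNIV"
proof (rule subsemimodule_eq_UNIV_if_not_fixed)
  show "subsemimodule madd act ({x. m \<preceq> x} \<union> {x. act z m \<preceq> x})"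
    using act_zero_below by (rule subsemimodule_up_set_union)
  show "m \<in> {x. m \<preceq> x} \<union> {x. act z m \<preceq> x}" by simp
  show "act r m \<noteq> m" by fact
qed

context
  assumes no_neutral: "\<not> has_neutral madd"
begin

lemma exists_not_above: "\<exists>x. \<not> m \<preceq> x"
  using no_neutral unfolding has_neutral_def below_def by blast

lemma exists_minimal_not_fixed: "\<exists>m r. minimal m \<and> act r m \<noteq> m"
proof (rule ccontr)
  assume "\<nexists>m r. minimal m \<and> act r m \<noteq> m"
  then have minimal_fixed: "act r m = m" if "minimal m" for r m
    using that by blast
  have "act r x = x" for r x
  proof -
    obtain m where "m \<preceq> x" "minimal m"
      using exists_minimal_below[OF finite_carrier] by blast
    have "subsemimodule madd act {x. m \<preceq> x}"
      using minimal_fixed[OF \<open>minimal m\<close>] by (intro subsemimodule_up_set) simp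
    moreover have "{x. m \<preceq> x} \<noteq> UNIV"
      using exists_not_above by blast
    ultimately show ?thesis
      using \<open>m \<preceq> x\<close> subsemimodule_eq_UNIV_if_not_fixed[of "{x. m \<preceq> x}" x r] by blast
  qed
  then have "quasitrivial act" unfolding quasitrivial_def by simp
  then show False using sub_irreducible unfolding sub_irreducible_def by blast
qed

lemma act_zero_not_below:
  assumes "minimal m" "act r m \<noteq> m"
  shows "\<not> act z m \<preceq> m"
proof
  assume "act z m \<preceq> m"
  with assms(1) have "act z m = m" unfolding minimal_def by blast
  obtain x where "\<not> m \<preceq> x" using exists_not_above by blast
  moreover have "x \<in> {x. m \<preceq> x} \<union> {x. act z m \<preceq> x}"
    using up_set_union_eq_UNIV[OF assms(2)] by simp
  ultimately show False using \<open>act z m = m\<close> by simp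
qed

text \<open>Otherwise \<open>z m' \<preceq> m\<close>, hence \<open>z m' = m\<close> by minimality and
  \<open>m' = z m \<preceq> (z z) m = z m' = m\<close>.\<close>

lemma act_fixes_act_zero:
  assumes "minimal m" "act r m \<noteq> m"
  shows "act s (act z m) = act z m"
proof (rule ccontr)
  let ?m' = "act z m"
  assume "act s ?m' \<noteq> ?m'"
  then have "{x. ?m' \<preceq> x} \<union> {x. act z ?m' \<preceq> x} = UNIV"
    by (rule up_set_union_eq_UNIV)
  then have "act z ?m' \<preceq> m"
    using act_zero_not_below[OF assms] by blast
  with assms(1) have "act (mul z z) m = m"
    unfolding minimal_def act_act by blast
  then have "?m' \<preceq> m" using act_zero_below[of m "mul z z"] by simp
  then show False using act_zero_not_below[OF assms] by blast
qed

lemma act_mul_left_trivial: "act (mul r s) x = act s x"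
proof -
  obtain m r0 where m: "minimal m" "act r0 m \<noteq> m"
    using exists_minimal_not_fixed by blast
  let ?m' = "act z m"
  have "subsemimodule madd act {x. ?m' \<preceq> x}"
    using act_fixes_act_zero[OF m] by (intro subsemimodule_up_set) simp
  moreover have "{x. ?m' \<preceq> x} \<noteq> UNIV"
    using act_zero_not_below[OF m] by blast
  ultimately have up_fixed: "act r y = y" if "?m' \<preceq> y" for r y
    using that subsemimodule_eq_UNIV_if_not_fixed[of "{x. ?m' \<preceq> x}" y r] by blast
  have "x \<in> {x. m \<preceq> x} \<union> {x. ?m' \<preceq> x}"
    using up_set_union_eq_UNIV[OF m(2)] by simp
  then have "?m' \<preceq> act s x \<or> ?m' \<preceq> x"
    using act_mono[of m x s] act_zero_below[of m s] below_trans by blast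
  then have "act r (act s x) = act s x"
    using up_fixed by metis
  then show ?thesis using act_act by simp
qed

end

end

theorem proposition2p23:
  fixes add mul :: "'r \<Rightarrow> 'r \<Rightarrow> 'r"
    and madd :: "'m \<Rightarrow> 'm \<Rightarrow> 'm"
    and act :: "'r \<Rightarrow> 'm \<Rightarrow> 'm"
  assumes "finite (UNIV :: 'r set)"
    and "simple_semiring add mul"
    and "add_idempotent add"
    and "card (UNIV :: 'r set) > 2"
    and "has_neutral add"
    and "finite (UNIV :: 'm set)"
    and "semimodule add mul madd act"
    and "add_idempotent madd"
    and "sub_irreducible madd act"
  shows "has_neutral madd"
proof (rule ccontr)
  assume no_neutral: "\<not> has_neutral madd"
  obtain z where zero: "\<And>r. add z r = r"
    using assms(5) unfolding has_neutral_def by blast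
  interpret finite_sub_irreducible_semimodule add mul madd act z
    using assms zero by unfold_locales
  have "\<not> quasitrivial act"
    using assms(9) unfolding sub_irreducible_def by blast
  then have "mul r s = s" for r s
    using simple_semiring_action_faithful[OF assms(2,7)] act_mul_left_trivial[OF no_neutral] by blast
  then show False
    using simple_semiring_mul_not_left_trivial[OF assms(2,3) zero assms(4)] by blast
qed

end
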